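(* Let $k\ge 2$ and let $N$ be a power of two. Let $A_1,\dots,A_k$ be integer sequences, each split into $N$ blocks $A_i=\alpha_i^0\alpha_i^1\cdots\alpha_i^{N-1}$, such that for all $j_1,\dots,j_k\in\{0,\dots,N-1\}$, $\mathrm{lcis}(\alpha_1^0\cdots\alpha_1^{j_1},\dots,\alpha_k^0\cdots\alpha_k^{j_k})=j_1+\cdots+j_k+N$. Let $s$ be the largest element appearing in $A_1,\dots,A_k$. For $i\in\{1,\dots,k\}$ let $T_i^0$ be the increasingly sorted sequence of all numbers $2s+x$ with $x\in\{1,\dots,2^k-1\}$ whose $i$-th bit in binary representation is $0$, and $T_i^1$ the increasingly sorted sequence of those with $i$-th bit equal to $1$. Define $B_i=\beta_i^0\cdots\beta_i^{2N-1}$ by $\beta_i^{2j}=\mathrm{inflate}(\alpha_i^j)\circ T_i^0$ and $\beta_i^{2j+1}=T_i^1$ for $j\in\{0,\dots,N-1\}$. Then for all $j_1,\dots,j_k\in\{0,1,\dots,2N-1\}$, $$\mathrm{lcis}(\beta_1^0\cdots\beta_1^{j_1},\beta_2^0\cdots\beta_2^{j_2},\dots,\beta_k^0\cdots\beta_k^{j_k})=j_1+j_2+\cdots+j_k+2N.$$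
   Context: $\mathrm{lcis}(X_1,\dots,X_k)$ denotes the length of the longest strictly increasing sequence that is a subsequence of every $X_i$. For $A=\langle a_0,\dots,a_{n-1}\rangle$, $\mathrm{inflate}(A)=\langle 2a_0-1,2a_0,\dots,2a_{n-1}-1,2a_{n-1}\rangle$; $\circ$ and juxtaposition denote concatenation. *)

theory Defs
  imports Main "HOL-Library.Sublist"
begin

text \<open>Sequences are integer lists; a family of k sequences is X :: nat \<Rightarrow> int list, indexed by 0..k-1.\<close>

definition common_incr_subseq :: "nat \<Rightarrow> (nat \<Rightarrow> int list) \<Rightarrow> int list \<Rightarrow> bool" where
  "common_incr_subseq k X zs \<longleftrightarrow> sorted_wrt (<) zs \<and> (\<forall>i<k. subseq zs (X i))"

definition lcis :: "nat \<Rightarrow> (nat \<Rightarrow> int list) \<Rightarrow> nat" where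
  "lcis k X = Max (length ` {zs. common_incr_subseq k X zs})"

definition inflate :: "int list \<Rightarrow> int list" where
  "inflate A = concat (map (\<lambda>a. [2*a - 1, 2*a]) A)"

text \<open>T i b: increasingly sorted list of all 2s+x, 1 \<le> x \<le> 2^k-1, whose i-th bit (0-based,
  i < k, bit i = coefficient of 2^i) equals b.\<close>
definition Tseq :: "nat \<Rightarrow> int \<Rightarrow> nat \<Rightarrow> bool \<Rightarrow> int list" where
  "Tseq k s i b = sorted_list_of_set {2*s + int x | x. x \<in> {1..<2^k} \<and> bit x i = b}"

definition beta :: "nat \<Rightarrow> int \<Rightarrow> (nat \<Rightarrow> nat \<Rightarrow> int list) \<Rightarrow> nat \<Rightarrow> nat \<Rightarrow> int list" where
  "beta k s alpha i j = (if even j then inflate (alpha i (j div 2)) @ Tseq k s i False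
                          else Tseq k s i True)"

definition prefix_blocks :: "(nat \<Rightarrow> int list) \<Rightarrow> nat \<Rightarrow> int list" where
  "prefix_blocks blk j = concat (map blk [0..<Suc j])"

end

theory Submission
  imports Defs
begin

(* Split a common increasing subsequence W of the prefixes of the B_i into its part L of values
   at most 2s, which come from the inflated blocks, and its part H of values above 2s, which come
   from the T-blocks. Halving the values of L yields a common increasing subsequence of prefixes of
   the A_i, so |L| <= 2 (sum_i floor(d_i/2) + N), where d_i is the block of B_i containing the first
   element h of H. Two consecutive elements of H differ, hence so do their bit patterns, so each
   further element of H moves some coordinate to a later T-block: |H| <= 1 + sum_i (j_i - d_i).
   Since h - 2s is nonzero, one of its bits is set, so some d_i is odd, which pays for the 1.
   Conversely, inflating an optimal common subsequence of the alpha-prefixes and appending one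
   number 2s + x for every odd j_i, with the bits of x switched on one coordinate at a time,
   attains the bound. *)

lemma subseq_concat_append_ConsD:
  assumes "subseq (xs @ y # ys) (concat bs)"
  shows "\<exists>d<length bs. subseq xs (concat (take (Suc d) bs)) \<and> y \<in> set (bs ! d) \<and>
           subseq ys (concat (drop d bs))"
  using assms
proof (induction bs arbitrary: xs)
  case Nil
  then show ?case by simp
next
  case (Cons b bs)
  then obtain us vs where split: "xs @ y # ys = us @ vs" "subseq us b" "subseq vs (concat bs)"
    by (auto elim: subseq_appendE)
  show ?case
  proof (cases "length xs < length us")
    case True
    then obtain us' where us: "us = xs @ y # us'" and ys: "ys = us' @ vs"
      using split(1) by (auto simp: append_eq_append_conv2 Cons_eq_append_conv)
    have "subseq us' us"
      using subseq_drop_many[of us' us' "xs @ [y]"] unfolding us by simp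
    then have "subseq us' b"
      using split(2) by (rule subseq_order.order_trans)
    then have "subseq ys (b @ concat bs)"
      unfolding ys using split(3) by (rule list_emb_append_mono)
    moreover have "subseq xs b" "y \<in> set b"
      using split(2) unfolding us by (auto dest: list_emb_appendD list_emb_set)
    ultimately show ?thesis by (intro exI[of _ 0]) auto
  next
    case False
    then obtain xs' where xs: "xs = us @ xs'" and vs: "vs = xs' @ y # ys"
      using split(1) by (auto simp: append_eq_append_conv2)
    obtain d where "d < length bs" "subseq xs' (concat (take (Suc d) bs))" "y \<in> set (bs ! d)"
      "subseq ys (concat (drop d bs))"
      using Cons.IH[of xs'] split(3) vs by blast
    then show ?thesis
      unfolding xs using split(2) by (intro exI[of _ "Suc d"]) (auto intro: list_emb_append_mono)
  qed
qed

lemma subseq_concat_map_ConsD: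
  assumes "subseq (y # ys) (concat (map f xs))"
  shows "\<exists>d<length xs. y \<in> set (f (xs ! d)) \<and> subseq ys (concat (map f (drop d xs)))"
proof -
  obtain d where "d < length (map f xs)" "y \<in> set (map f xs ! d)" "subseq ys (concat (drop d (map f xs)))"
    using subseq_concat_append_ConsD[of "[]" y ys "map f xs"] assms by auto
  then show ?thesis
    by (intro exI[of _ d]) (simp add: drop_map)
qed

lemma subseq_filter_rightI: "subseq xs ys \<Longrightarrow> \<forall>x\<in>set xs. P x \<Longrightarrow> subseq xs (filter P ys)"
  by (induction xs ys rule: list_emb.induct) auto

lemma set_subseq_subset: "subseq xs ys \<Longrightarrow> set xs \<subseteq> set ys"
  by (induction xs ys rule: list_emb.induct) auto

lemma subseq_concat_map: "subseq xs ys \<Longrightarrow> subseq (concat (map f xs)) (concat (map f ys))"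
  by (induction xs ys rule: list_emb.induct) (auto intro: list_emb_append_mono)

lemma sorted_obtain_strict_subseq:
  fixes xs :: "'a::linorder list"
  assumes "sorted xs"
  obtains ys where "sorted_wrt (<) ys" "set ys = set xs" "subseq ys xs"
  using assms
proof (induction xs arbitrary: thesis)
  case Nil
  then show ?case by (metis list.set(1) list_emb_Nil sorted_wrt.simps(1))
next
  case (Cons x xs)
  then obtain ys where ys: "sorted_wrt (<) ys" "set ys = set xs" "subseq ys xs" by auto
  show ?case
  proof (cases "x \<in> set xs")
    case True
    then show ?thesis using Cons.prems(1)[of ys] ys by auto
  next
    case False
    then have "\<forall>y\<in>set ys. x < y" using Cons.prems(2) ys(2) by (auto simp: le_less)
    then show ?thesis using Cons.prems(1)[of "x # ys"] ys by auto
  qed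
qed

lemma distinct_subseq_doubled:
  assumes "distinct xs" "subseq xs (concat (map (\<lambda>a. [a, a]) ys))"
  shows "subseq xs ys"
  using assms
proof (induction ys arbitrary: xs)
  case Nil
  then show ?case by simp
next
  case (Cons a ys)
  have "subseq xs ([a, a] @ concat (map (\<lambda>a. [a, a]) ys))"
    using Cons.prems(2) by simp
  then obtain xs1 xs2 where xs: "xs = xs1 @ xs2" "subseq xs1 [a, a]"
    "subseq xs2 (concat (map (\<lambda>a. [a, a]) ys))"
    by (rule subseq_appendE)
  have "distinct xs1" "set xs1 \<subseteq> {a}"
    using Cons.prems(1) xs(1) set_subseq_subset[OF xs(2)] by auto
  then have "xs1 = [] \<or> xs1 = [a]"
    by (cases xs1) (auto simp: subset_singleton_iff)
  then have "subseq xs1 [a]"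
    by auto
  moreover have "subseq xs2 ys"
    using Cons.IH Cons.prems(1) xs by simp
  ultimately show ?case
    unfolding xs(1) using list_emb_append_mono[of _ xs1 "[a]" xs2 ys] by simp
qed

lemma nat_eq_if_low_bits_eq:
  fixes a b :: nat
  assumes "a < 2 ^ k" "b < 2 ^ k" "\<forall>i<k. bit a i = bit b i"
  shows "a = b"
proof -
  have "take_bit k a = a" "take_bit k b = b"
    using assms(1,2) by (simp_all add: take_bit_nat_eq_self)
  then show ?thesis
    using assms(3) by (metis bit_eq_iff bit_take_bit_iff)
qed

lemma finite_common_incr_subseqs: "0 < k \<Longrightarrow> finite {zs. common_incr_subseq k X zs}"
proof -
  assume "0 < k"
  then have "{zs. common_incr_subseq k X zs} \<subseteq> {zs. set zs \<subseteq> set (X 0) \<and> length zs \<le> length (X 0)}"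
    by (auto simp: common_incr_subseq_def dest: list_emb_length set_subseq_subset)
  then show ?thesis
    by (rule finite_subset) (simp add: finite_lists_length_le)
qed

lemma length_le_lcis: "0 < k \<Longrightarrow> common_incr_subseq k X zs \<Longrightarrow> length zs \<le> lcis k X"
  unfolding lcis_def by (rule Max_ge) (auto simp: finite_common_incr_subseqs)

lemma lcis_attained:
  assumes "0 < k"
  obtains zs where "common_incr_subseq k X zs" "length zs = lcis k X"
proof -
  have "common_incr_subseq k X []"
    by (simp add: common_incr_subseq_def)
  then have "lcis k X \<in> length ` {zs. common_incr_subseq k X zs}"
    unfolding lcis_def using finite_common_incr_subseqs[OF assms] by (intro Max_in) auto
  then show ?thesis using that by auto
qed

lemma lcis_eqI:
  assumes "0 < k" "common_incr_subseq k X zs" "length zs = n"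
    "\<And>ws. common_incr_subseq k X ws \<Longrightarrow> length ws \<le> n"
  shows "lcis k X = n"
  using assms by (metis le_antisym lcis_attained length_le_lcis)

lemma inflate_append: "inflate (xs @ ys) = inflate xs @ inflate ys"
  unfolding inflate_def by simp

lemma length_inflate: "length (inflate xs) = 2 * length xs"
  unfolding inflate_def by (induction xs) auto

lemma set_inflate: "set (inflate xs) = (\<Union>a\<in>set xs. {2 * a - 1, 2 * a})"
  unfolding inflate_def by auto

lemma sorted_inflate: "sorted_wrt (<) xs \<Longrightarrow> sorted_wrt (<) (inflate xs)"
  by (induction xs) (auto simp: inflate_def set_inflate[unfolded inflate_def])

lemma subseq_inflate: "subseq xs ys \<Longrightarrow> subseq (inflate xs) (inflate ys)"
  unfolding inflate_def by (rule subseq_concat_map)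

definition half_up :: "int \<Rightarrow> int" where
  "half_up v = (v + 1) div 2"

lemma map_half_up_inflate: "map half_up (inflate xs) = concat (map (\<lambda>a. [a, a]) xs)"
  unfolding inflate_def half_up_def by (induction xs) auto

lemma card_le_twice_card_image_half_up:
  assumes "finite A"
  shows "card A \<le> 2 * card (half_up ` A)"
proof -
  have fibre: "card {v\<in>A. half_up v = u} \<le> 2" for u
  proof -
    have "{v\<in>A. half_up v = u} \<subseteq> {2 * u - 1, 2 * u}"
      unfolding half_up_def by auto
    then have "card {v\<in>A. half_up v = u} \<le> card {2 * u - 1, 2 * u}"
      by (rule card_mono[rotated]) simp
    also have "\<dots> \<le> 2"
      by (simp add: card_insert_le_m1)
    finally show ?thesis .
  qed
  have "A = (\<Union>u\<in>half_up ` A. {v\<in>A. half_up v = u})"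
    by auto
  then have "card A \<le> (\<Sum>u\<in>half_up ` A. card {v\<in>A. half_up v = u})"
    by (metis card_UN_le assms finite_imageI)
  also have "\<dots> \<le> 2 * card (half_up ` A)"
    using sum_mono[of "half_up ` A" "\<lambda>u. card {v\<in>A. half_up v = u}" "\<lambda>_. 2"] fibre
    by simp
  finally show ?thesis .
qed

lemma length_le_twice_lcis_inflate:
  assumes "0 < k" "common_incr_subseq k (\<lambda>i. inflate (X i)) L"
  shows "length L \<le> 2 * lcis k X"
proof -
  have L: "sorted_wrt (<) L" "\<forall>i<k. subseq L (inflate (X i))"
    using assms(2) by (auto simp: common_incr_subseq_def)
  have "sorted_wrt (\<lambda>x y. half_up x \<le> half_up y) L"
    using L(1) by (rule sorted_wrt_mono_rel[rotated]) (simp add: half_up_def zdiv_mono1)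
  then have "sorted (map half_up L)"
    by (simp add: sorted_map)
  then obtain D where D: "sorted_wrt (<) D" "set D = half_up ` set L" "subseq D (map half_up L)"
    by (rule sorted_obtain_strict_subseq) auto
  have "subseq D (X i)" if "i < k" for i
  proof (rule distinct_subseq_doubled)
    show "distinct D"
      using D(1) by (simp add: strict_sorted_iff)
    have "subseq (map half_up L) (map half_up (inflate (X i)))"
      using L(2) that by (blast intro: subseq_map)
    then show "subseq D (concat (map (\<lambda>a. [a, a]) (X i)))"
      using D(3) by (metis map_half_up_inflate subseq_order.order_trans)
  qed
  then have "length D \<le> lcis k X"
    using D(1) assms(1) by (auto simp: common_incr_subseq_def intro: length_le_lcis)
  moreover have "length L = card (set L)" "length D = card (set D)"
    using L(1) D(1) by (simp_all add: distinct_card strict_sorted_iff)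
  ultimately show ?thesis
    using card_le_twice_card_image_half_up[of "set L"] D(2) by simp
qed

lemma set_Tseq: "set (Tseq k s i b) = {2 * s + int x | x. x \<in> {1..<2 ^ k} \<and> bit x i = b}"
  unfolding Tseq_def by (subst set_sorted_list_of_set) auto

lemma sorted_Tseq: "sorted_wrt (<) (Tseq k s i b)"
  unfolding Tseq_def by (rule strict_sorted_list_of_set)

lemma in_set_Tseq_iff:
  "v \<in> set (Tseq k s i b) \<longleftrightarrow> (\<exists>x. v = 2 * s + int x \<and> x \<in> {1..<2 ^ k} \<and> bit x i = b)"
  unfolding set_Tseq by blast

lemma Tseq_gt: "v \<in> set (Tseq k s i b) \<Longrightarrow> 2 * s < v"
  unfolding in_set_Tseq_iff by auto

lemma common_Tseq_elemE:
  assumes "0 < k" "\<forall>i<k. v \<in> set (Tseq k s i (b i))"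
  obtains x where "v = 2 * s + int x" "x < 2 ^ k" "\<forall>i<k. bit x i = b i" "\<exists>i<k. b i"
proof -
  obtain x where x: "v = 2 * s + int x" "x \<in> {1..<2 ^ k}"
    using assms unfolding in_set_Tseq_iff by blast
  have bits: "bit x i = b i" if i: "i < k" for i
  proof -
    obtain x' where "v = 2 * s + int x'" "bit x' i = b i"
      using assms(2) i unfolding in_set_Tseq_iff by blast
    then show ?thesis
      using x(1) by simp
  qed
  have "\<exists>i<k. b i"
  proof (rule ccontr)
    assume "\<not> (\<exists>i<k. b i)"
    then have "x = 0"
      using nat_eq_if_low_bits_eq[of x k 0] x(2) bits by simp
    then show False
      using x(2) by simp
  qed
  with x bits show ?thesis
    by (intro that[of x]) auto
qed

lemma length_le_Tseq_block_moves:
  fixes H :: "int list" and ps :: "nat \<Rightarrow> bool list" and x :: nat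
  assumes "0 < k" "\<forall>i<k. ps i \<noteq> []" "sorted_wrt (<) H"
    "\<forall>i<k. subseq H (concat (map (Tseq k s i) (ps i)))"
    "x < 2 ^ k" "\<forall>i<k. bit x i = hd (ps i)" "\<forall>v\<in>set H. 2 * s + int x < v"
  shows "length H \<le> (\<Sum>i<k. length (ps i) - 1)"
  using assms(2-)
proof (induction H arbitrary: ps x)
  case Nil
  then show ?case by simp
next
  case (Cons h H)
  have moves: "\<forall>i\<in>{..<k}. \<exists>d. d < length (ps i) \<and> h \<in> set (Tseq k s i (ps i ! d)) \<and>
      subseq H (concat (map (Tseq k s i) (drop d (ps i))))"
    using Cons.prems(3) subseq_concat_map_ConsD[of h H "Tseq k s _"] by simp
  obtain d where d: "\<forall>i\<in>{..<k}. d i < length (ps i) \<and> h \<in> set (Tseq k s i (ps i ! d i)) \<and>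
      subseq H (concat (map (Tseq k s i) (drop (d i) (ps i))))"
    using bchoice[OF moves] by blast
  then have d_less: "d i < length (ps i)"
    and H_sub: "subseq H (concat (map (Tseq k s i) (drop (d i) (ps i))))" if "i < k" for i
    using that by simp_all
  have h_in: "\<forall>i<k. h \<in> set (Tseq k s i (ps i ! d i))"
    using d by simp
  obtain y where y: "h = 2 * s + int y" "y < 2 ^ k" and bit_y: "\<forall>i<k. bit y i = ps i ! d i"
    using common_Tseq_elemE[OF assms(1) h_in] by blast
  \<comment> \<open>As \<open>h > 2s + x\<close>, the bit patterns of \<open>y\<close> and \<open>x\<close> differ, so some coordinate has
    left its first block.\<close>
  have "\<exists>i<k. d i \<noteq> 0"
  proof (rule ccontr)
    assume no_move: "\<not> (\<exists>i<k. d i \<noteq> 0)"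
    have "bit y i = bit x i" if i: "i < k" for i
    proof -
      have "ps i \<noteq> []" "d i = 0"
        using Cons.prems(1) no_move i by auto
      then show ?thesis
        using bit_y Cons.prems(5) i by (simp add: hd_conv_nth)
    qed
    then have "y = x"
      using nat_eq_if_low_bits_eq[of y k x] y(2) Cons.prems(4) by simp
    then show False
      using Cons.prems(6) y(1) by simp
  qed
  then obtain i0 where i0: "i0 < k" "d i0 \<noteq> 0"
    by blast
  have "length H \<le> (\<Sum>i<k. length (drop (d i) (ps i)) - 1)"
  proof (rule Cons.IH)
    show "\<forall>i<k. drop (d i) (ps i) \<noteq> []"
      using d_less by (simp add: not_le)
    show "\<forall>i<k. subseq H (concat (map (Tseq k s i) (drop (d i) (ps i))))"
      using H_sub by simp
    show "sorted_wrt (<) H" "y < 2 ^ k" "\<forall>v\<in>set H. 2 * s + int y < v"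
      using Cons.prems(2) y by auto
    show "\<forall>i<k. bit y i = hd (drop (d i) (ps i))"
      using bit_y d_less by (simp add: hd_drop_conv_nth)
  qed
  moreover have "(\<Sum>i<k. length (ps i) - 1) = (\<Sum>i<k. length (drop (d i) (ps i)) - 1) + (\<Sum>i<k. d i)"
    unfolding sum.distrib[symmetric] by (rule sum.cong) (auto dest: d_less)
  moreover have "d i0 \<le> (\<Sum>i<k. d i)"
    using i0 by (intro member_le_sum) auto
  ultimately show ?case
    using i0 by simp
qed

lemma bit_nat_imp_exp_le: "bit (m::nat) n \<Longrightarrow> 2 ^ n \<le> m"
  by (rule ccontr) (simp add: bit_nat_def)

lemma bit_horner_sum_map_upt_iff:
  "bit (horner_sum of_bool 2 (map r [0..<n]) :: nat) i \<longleftrightarrow> i < n \<and> r i"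
  by (auto simp: bit_horner_sum_bit_iff)

lemma horner_sum_map_upt_less: "(horner_sum of_bool 2 (map r [0..<n]) :: nat) < 2 ^ n"
proof -
  have "take_bit n (horner_sum of_bool 2 (map r [0..<n]) :: nat) = horner_sum of_bool 2 (map r [0..<n])"
    by (simp only: take_bit_horner_sum_bit_eq take_all length_map length_upt diff_zero order_refl)
  then show ?thesis
    by (simp only: take_bit_nat_eq_self_iff)
qed

definition prefix_code :: "(nat \<Rightarrow> bool) \<Rightarrow> nat \<Rightarrow> nat" where
  "prefix_code r n = horner_sum of_bool 2 (map r [0..<Suc n])"

lemma bit_prefix_code_iff: "bit (prefix_code r n) i \<longleftrightarrow> i \<le> n \<and> r i"
  unfolding prefix_code_def bit_horner_sum_map_upt_iff by auto

lemma prefix_code_less: "prefix_code r n < 2 ^ Suc n"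
  unfolding prefix_code_def by (rule horner_sum_map_upt_less)

lemma prefix_code_ge: "r n \<Longrightarrow> 2 ^ n \<le> prefix_code r n"
  by (simp add: bit_nat_imp_exp_le bit_prefix_code_iff)

lemma prefix_code_strict_mono: "m < n \<Longrightarrow> r n \<Longrightarrow> prefix_code r m < prefix_code r n"
proof -
  assume "m < n" "r n"
  then have "(2::nat) ^ Suc m \<le> 2 ^ n"
    by (intro power_increasing) simp_all
  then show ?thesis
    using prefix_code_less[of r m] prefix_code_ge[of r n] \<open>r n\<close> by linarith
qed

lemma prefix_code_bounds: "n < k \<Longrightarrow> r n \<Longrightarrow> prefix_code r n \<in> {1..<2 ^ k}"
proof -
  assume "n < k" "r n"
  then have "(2::nat) ^ Suc n \<le> 2 ^ k"
    by (intro power_increasing) simp_all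
  moreover have "(1::nat) \<le> 2 ^ n"
    by simp
  ultimately show ?thesis
    using prefix_code_less[of r n] prefix_code_ge[of r n] \<open>r n\<close> by simp
qed

lemma sorted_map_prefix_code:
  assumes "sorted_wrt (<) ns" "\<forall>n\<in>set ns. r n"
  shows "sorted_wrt (<) (map (\<lambda>n. 2 * s + int (prefix_code r n)) ns)"
proof -
  have "sorted_wrt (\<lambda>a b. prefix_code r a < prefix_code r b) ns"
    using assms(1) by (rule sorted_wrt_mono_rel[rotated]) (use assms(2) prefix_code_strict_mono in auto)
  then show ?thesis
    by (simp add: sorted_wrt_map)
qed

lemma subseq_Tseq_map_prefix_code:
  assumes "sorted_wrt (<) ns" "\<forall>n\<in>set ns. r n \<and> n < k \<and> bit (prefix_code r n) i = b"
  shows "subseq (map (\<lambda>n. 2 * s + int (prefix_code r n)) ns) (Tseq k s i b)"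
proof (rule sorted_subset_imp_subseq)
  show "sorted_wrt (<) (map (\<lambda>n. 2 * s + int (prefix_code r n)) ns)"
    using assms by (intro sorted_map_prefix_code) auto
  show "sorted_wrt (\<le>) (Tseq k s i b)"
    using sorted_Tseq by (rule sorted_wrt_mono_rel[rotated]) simp
  show "set (map (\<lambda>n. 2 * s + int (prefix_code r n)) ns) \<subseteq> set (Tseq k s i b)"
    using assms(2) prefix_code_bounds unfolding set_Tseq by fastforce
qed

lemma exists_subseq_Tseq_tails:
  "\<exists>E. sorted_wrt (<) E \<and> length E = (\<Sum>i<k. of_bool (r i)) \<and> (\<forall>v\<in>set E. 2 * s < v) \<and>
     (\<forall>i<k. subseq E (Tseq k s i False @ (if r i then Tseq k s i True else [])))"
proof -
  \<comment> \<open>Along \<open>E\<close> the bits switch on one coordinate at a time, in increasing order.\<close>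
  define E where "E = map (\<lambda>n. 2 * s + int (prefix_code r n)) (filter r [0..<k])"
  have "subseq E (Tseq k s i False @ (if r i then Tseq k s i True else []))" if "i < k" for i
  proof (cases "r i")
    case True
    have "filter r [0..<k] = filter r [0..<i] @ filter r [i..<k]"
      using upt_add_eq_append[of 0 i "k - i"] that by simp
    then have "E = map (\<lambda>n. 2 * s + int (prefix_code r n)) (filter r [0..<i]) @
        map (\<lambda>n. 2 * s + int (prefix_code r n)) (filter r [i..<k])"
      unfolding E_def by simp
    moreover have "subseq (map (\<lambda>n. 2 * s + int (prefix_code r n)) (filter r [0..<i])) (Tseq k s i False)"
      using that by (intro subseq_Tseq_map_prefix_code) (auto simp: bit_prefix_code_iff sorted_wrt_filter)
    moreover have "subseq (map (\<lambda>n. 2 * s + int (prefix_code r n)) (filter r [i..<k])) (Tseq k s i True)"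
      using True by (intro subseq_Tseq_map_prefix_code) (auto simp: bit_prefix_code_iff sorted_wrt_filter)
    ultimately show ?thesis
      using True by (simp add: list_emb_append_mono)
  next
    case False
    have "subseq E (Tseq k s i False)"
      unfolding E_def using False
      by (intro subseq_Tseq_map_prefix_code) (auto simp: bit_prefix_code_iff sorted_wrt_filter)
    then show ?thesis
      using False by simp
  qed
  moreover have "sorted_wrt (<) E"
    unfolding E_def by (intro sorted_map_prefix_code) (auto simp: sorted_wrt_filter)
  moreover have "length E = (\<Sum>i<k. of_bool (r i))"
    unfolding E_def by (induction k) auto
  moreover have "\<forall>v\<in>set E. 2 * s < v"
    using prefix_code_bounds unfolding E_def by fastforce
  ultimately show ?thesis by blast
qed

lemma filter_Tseq:
  "filter (\<lambda>v. v \<le> 2 * s) (Tseq k s i b) = []"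
  "filter (\<lambda>v. 2 * s < v) (Tseq k s i b) = Tseq k s i b"
  by (auto simp: filter_id_conv filter_empty_conv dest: Tseq_gt)

lemma prefix_blocks_0: "prefix_blocks blk 0 = blk 0"
  unfolding prefix_blocks_def by simp

lemma prefix_blocks_Suc: "prefix_blocks blk (Suc j) = prefix_blocks blk j @ blk (Suc j)"
  unfolding prefix_blocks_def by simp

lemma in_set_prefix_blocks_iff: "x \<in> set (prefix_blocks blk j) \<longleftrightarrow> (\<exists>q\<le>j. x \<in> set (blk q))"
  unfolding prefix_blocks_def by (auto simp: less_Suc_eq_le simp del: upt_Suc)

lemma beta_even: "even j \<Longrightarrow> beta k s alpha i j = inflate (alpha i (j div 2)) @ Tseq k s i False"
  unfolding beta_def by simp

lemma beta_odd: "odd j \<Longrightarrow> beta k s alpha i j = Tseq k s i True"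
  unfolding beta_def by simp

lemma subseq_prefix_blocks_beta:
  "subseq (inflate (prefix_blocks (alpha i) (j div 2)) @ Tseq k s i False @
      (if odd j then Tseq k s i True else []))
    (prefix_blocks (beta k s alpha i) j)"
proof (induction j)
  case 0
  then show ?case by (simp add: prefix_blocks_0 beta_even)
next
  case (Suc j)
  let ?A = "inflate (prefix_blocks (alpha i) (j div 2))"
  show ?case
  proof (cases "even j")
    case True
    then have "subseq (?A @ Tseq k s i False) (prefix_blocks (beta k s alpha i) j)"
      using Suc.IH by simp
    then have "subseq ((?A @ Tseq k s i False) @ Tseq k s i True)
        (prefix_blocks (beta k s alpha i) j @ Tseq k s i True)"
      by (rule list_emb_append_mono) simp
    moreover have "Suc j div 2 = j div 2"
      using True by presburger
    ultimately show ?thesis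
      using True by (simp add: prefix_blocks_Suc beta_odd)
  next
    case False
    have "subseq ?A (?A @ Tseq k s i False @ Tseq k s i True)"
      by (rule list_emb_prefix) simp
    then have "subseq ?A (prefix_blocks (beta k s alpha i) j)"
      using Suc.IH False by (auto intro: subseq_order.order_trans)
    then have "subseq (?A @ inflate (alpha i (Suc j div 2)) @ Tseq k s i False)
        (prefix_blocks (beta k s alpha i) j @ inflate (alpha i (Suc j div 2)) @ Tseq k s i False)"
      by (rule list_emb_append_mono) simp
    moreover have "Suc j div 2 = Suc (j div 2)"
      using False by presburger
    ultimately show ?thesis
      using False by (simp add: prefix_blocks_Suc beta_even inflate_append)
  qed
qed

locale lcis_block_family =
  fixes k N :: nat and alpha :: "nat \<Rightarrow> nat \<Rightarrow> int list" and s :: int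
  assumes k_pos: "0 < k"
    and lcis_prefix_blocks_alpha: "\<And>j. \<forall>i<k. j i < N \<Longrightarrow>
      lcis k (\<lambda>i. prefix_blocks (alpha i) (j i)) = (\<Sum>i<k. j i) + N"
    and alpha_le: "\<And>i q a. i < k \<Longrightarrow> q < N \<Longrightarrow> a \<in> set (alpha i q) \<Longrightarrow> a \<le> s"
begin

lemma inflate_alpha_le:
  "i < k \<Longrightarrow> e < 2 * N \<Longrightarrow> v \<in> set (inflate (alpha i (e div 2))) \<Longrightarrow> v \<le> 2 * s"
  using alpha_le[of i "e div 2"] unfolding set_inflate by force

lemma filter_inflate_alpha:
  assumes "i < k" "e < 2 * N"
  shows "filter (\<lambda>v. v \<le> 2 * s) (inflate (alpha i (e div 2))) = inflate (alpha i (e div 2))"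
    "filter (\<lambda>v. 2 * s < v) (inflate (alpha i (e div 2))) = []"
  by (auto simp: filter_id_conv filter_empty_conv dest: inflate_alpha_le[OF assms])

lemma filter_le_beta:
  "i < k \<Longrightarrow> e < 2 * N \<Longrightarrow> filter (\<lambda>v. v \<le> 2 * s) (beta k s alpha i e) =
    (if even e then inflate (alpha i (e div 2)) else [])"
  by (simp add: beta_def filter_inflate_alpha filter_Tseq)

lemma filter_gt_beta:
  "i < k \<Longrightarrow> e < 2 * N \<Longrightarrow> filter (\<lambda>v. 2 * s < v) (beta k s alpha i e) = Tseq k s i (odd e)"
  by (simp add: beta_def filter_inflate_alpha filter_Tseq)

lemma filter_le_prefix_blocks_beta:
  "i < k \<Longrightarrow> j < 2 * N \<Longrightarrow>
    filter (\<lambda>v. v \<le> 2 * s) (prefix_blocks (beta k s alpha i) j) =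
    inflate (prefix_blocks (alpha i) (j div 2))"
proof (induction j)
  case 0
  then show ?case by (simp add: prefix_blocks_0 filter_le_beta)
next
  case (Suc j)
  show ?case
  proof (cases "even j")
    case True
    then have "Suc j div 2 = j div 2"
      by presburger
    then show ?thesis
      using Suc True by (simp add: prefix_blocks_Suc filter_le_beta)
  next
    case False
    then have "Suc j div 2 = Suc (j div 2)"
      by presburger
    then show ?thesis
      using Suc False by (simp add: prefix_blocks_Suc filter_le_beta inflate_append)
  qed
qed

lemma length_le_low_part:
  assumes "\<forall>i<k. d i < 2 * N" "sorted_wrt (<) L"
    "\<forall>i<k. subseq L (inflate (prefix_blocks (alpha i) (d i div 2)))"
  shows "length L \<le> 2 * ((\<Sum>i<k. d i div 2) + N)"
proof -
  have "length L \<le> 2 * lcis k (\<lambda>i. prefix_blocks (alpha i) (d i div 2))"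
    using assms(2,3) k_pos by (intro length_le_twice_lcis_inflate) (auto simp: common_incr_subseq_def)
  also have "lcis k (\<lambda>i. prefix_blocks (alpha i) (d i div 2)) = (\<Sum>i<k. d i div 2) + N"
    using assms(1) by (intro lcis_prefix_blocks_alpha) auto
  finally show ?thesis .
qed

lemma split_at_first_high:
  assumes "i < k" "j < 2 * N" "\<forall>v\<in>set L. v \<le> 2 * s" "2 * s < h" "\<forall>v\<in>set H. 2 * s < v"
    "subseq (L @ h # H) (prefix_blocks (beta k s alpha i) j)"
  shows "\<exists>d\<le>j. subseq L (inflate (prefix_blocks (alpha i) (d div 2))) \<and>
    h \<in> set (Tseq k s i (odd d)) \<and> subseq H (concat (map (Tseq k s i) (map odd [d..<Suc j])))"
proof -
  define bs where "bs = map (beta k s alpha i) [0..<Suc j]"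
  have sub: "subseq (L @ h # H) (concat bs)"
    using assms(6) unfolding bs_def prefix_blocks_def .
  obtain d where d: "d < length bs" "subseq L (concat (take (Suc d) bs))" "h \<in> set (bs ! d)"
    "subseq H (concat (drop d bs))"
    using subseq_concat_append_ConsD[OF sub] by blast
  have dj: "d \<le> j" "d < 2 * N"
    using d(1) assms(2) unfolding bs_def by simp_all
  have "concat (take (Suc d) bs) = prefix_blocks (beta k s alpha i) d"
    using dj(1) unfolding bs_def prefix_blocks_def by (simp add: take_map take_upt del: upt_Suc)
  then have "subseq L (filter (\<lambda>v. v \<le> 2 * s) (prefix_blocks (beta k s alpha i) d))"
    using d(2) assms(3) by (simp add: subseq_filter_rightI)
  then have low: "subseq L (inflate (prefix_blocks (alpha i) (d div 2)))"
    using filter_le_prefix_blocks_beta assms(1) dj(2) by simp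
  have "bs ! d = beta k s alpha i d"
    using dj(1) unfolding bs_def by (simp del: upt_Suc)
  then have "h \<in> set (filter (\<lambda>v. 2 * s < v) (beta k s alpha i d))"
    using d(3) assms(4) by simp
  then have mid: "h \<in> set (Tseq k s i (odd d))"
    using filter_gt_beta assms(1) dj(2) by simp
  have "map (\<lambda>e. filter (\<lambda>v. 2 * s < v) (beta k s alpha i e)) [d..<Suc j] =
      map (\<lambda>e. Tseq k s i (odd e)) [d..<Suc j]"
  proof (rule map_cong[OF refl])
    fix e assume "e \<in> set [d..<Suc j]"
    then have "e < 2 * N"
      using assms(2) by auto
    then show "filter (\<lambda>v. 2 * s < v) (beta k s alpha i e) = Tseq k s i (odd e)"
      by (rule filter_gt_beta[OF assms(1)])
  qed
  then have "filter (\<lambda>v. 2 * s < v) (concat (drop d bs)) =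
      concat (map (Tseq k s i) (map odd [d..<Suc j]))"
    unfolding bs_def drop_map filter_concat map_map comp_def by (simp del: upt_Suc map_eq_conv)
  then have high: "subseq H (concat (map (Tseq k s i) (map odd [d..<Suc j])))"
    using subseq_filter_rightI[OF d(4) assms(5)] by simp
  show ?thesis
    using low mid high dj(1) by blast
qed

lemma length_le_if_no_high_part:
  assumes "\<forall>i<k. j i < 2 * N" "sorted_wrt (<) L" "\<forall>v\<in>set L. v \<le> 2 * s"
    "\<forall>i<k. subseq L (prefix_blocks (beta k s alpha i) (j i))"
  shows "length L \<le> (\<Sum>i<k. j i) + 2 * N"
proof -
  have "subseq L (inflate (prefix_blocks (alpha i) (j i div 2)))" if "i < k" for i
  proof -
    have "subseq L (filter (\<lambda>v. v \<le> 2 * s) (prefix_blocks (beta k s alpha i) (j i)))"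
      using assms(3,4) that by (intro subseq_filter_rightI) auto
    then show ?thesis
      using filter_le_prefix_blocks_beta that assms(1) by simp
  qed
  then have "length L \<le> 2 * ((\<Sum>i<k. j i div 2) + N)"
    using length_le_low_part assms(1,2) by blast
  moreover have "2 * (\<Sum>i<k. j i div 2) \<le> (\<Sum>i<k. j i)"
    unfolding sum_distrib_left by (rule sum_mono) simp
  ultimately show ?thesis
    by simp
qed

lemma split_at_first_high_all:
  assumes "\<forall>i<k. j i < 2 * N" "\<forall>v\<in>set L. v \<le> 2 * s" "2 * s < h" "\<forall>v\<in>set H. 2 * s < v"
    "\<forall>i<k. subseq (L @ h # H) (prefix_blocks (beta k s alpha i) (j i))"
  obtains d where "\<forall>i<k. d i \<le> j i" "\<forall>i<k. subseq L (inflate (prefix_blocks (alpha i) (d i div 2)))"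
    "\<forall>i<k. h \<in> set (Tseq k s i (odd (d i)))"
    "\<forall>i<k. subseq H (concat (map (Tseq k s i) (map odd [d i..<Suc (j i)])))"
proof -
  have splits: "\<forall>i\<in>{..<k}. \<exists>d. d \<le> j i \<and> subseq L (inflate (prefix_blocks (alpha i) (d div 2))) \<and>
      h \<in> set (Tseq k s i (odd d)) \<and>
      subseq H (concat (map (Tseq k s i) (map odd [d..<Suc (j i)])))"
  proof
    fix i assume i: "i \<in> {..<k}"
    show "\<exists>d. d \<le> j i \<and> subseq L (inflate (prefix_blocks (alpha i) (d div 2))) \<and>
        h \<in> set (Tseq k s i (odd d)) \<and>
        subseq H (concat (map (Tseq k s i) (map odd [d..<Suc (j i)])))"
      using split_at_first_high[OF _ _ assms(2-4), of i "j i"] i assms(1,5) by simp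
  qed
  obtain d where "\<forall>i\<in>{..<k}. d i \<le> j i \<and>
      subseq L (inflate (prefix_blocks (alpha i) (d i div 2))) \<and> h \<in> set (Tseq k s i (odd (d i))) \<and>
      subseq H (concat (map (Tseq k s i) (map odd [d i..<Suc (j i)])))"
    using bchoice[OF splits] by blast
  then show ?thesis
    by (intro that[of d]) (simp_all del: upt_Suc)
qed

lemma length_le_if_high_part:
  assumes "\<forall>i<k. j i < 2 * N" "sorted_wrt (<) (L @ h # H)" "\<forall>v\<in>set L. v \<le> 2 * s" "2 * s < h"
    "\<forall>i<k. subseq (L @ h # H) (prefix_blocks (beta k s alpha i) (j i))"
  shows "length (L @ h # H) \<le> (\<Sum>i<k. j i) + 2 * N"
proof -
  have sorted: "sorted_wrt (<) L" "sorted_wrt (<) H" "\<forall>v\<in>set H. h < v"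
    using assms(2) by (simp_all add: sorted_wrt_append)
  then have "\<forall>v\<in>set H. 2 * s < v"
    using assms(4) by auto
  then obtain d where d_le: "\<forall>i<k. d i \<le> j i"
    and L_sub: "\<forall>i<k. subseq L (inflate (prefix_blocks (alpha i) (d i div 2)))"
    and h_in: "\<forall>i<k. h \<in> set (Tseq k s i (odd (d i)))"
    and H_sub: "\<forall>i<k. subseq H (concat (map (Tseq k s i) (map odd [d i..<Suc (j i)])))"
    using split_at_first_high_all[OF assms(1,3,4) _ assms(5)] by blast
  obtain y where y: "h = 2 * s + int y" "y < 2 ^ k" "\<forall>i<k. bit y i = odd (d i)"
    and odd_d: "\<exists>i<k. odd (d i)"
    using common_Tseq_elemE[OF k_pos h_in] by blast
  have "\<forall>i<k. d i < 2 * N"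
    using assms(1) d_le le_less_trans by blast
  then have "length L \<le> 2 * ((\<Sum>i<k. d i div 2) + N)"
    using sorted(1) L_sub by (rule length_le_low_part)
  moreover have "length H \<le> (\<Sum>i<k. length (map odd [d i..<Suc (j i)]) - 1)"
  proof (rule length_le_Tseq_block_moves[OF k_pos _ sorted(2) H_sub y(2)])
    show "\<forall>i<k. map odd [d i..<Suc (j i)] \<noteq> []" "\<forall>i<k. bit y i = hd (map odd [d i..<Suc (j i)])"
      using d_le y(3) by (simp_all add: upt_conv_Cons le_imp_less_Suc del: upt_Suc)
    show "\<forall>v\<in>set H. 2 * s + int y < v"
      using sorted(3) y(1) by simp
  qed
  moreover have "(\<Sum>i<k. length (map odd [d i..<Suc (j i)]) - 1) = (\<Sum>i<k. j i - d i)"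
    by (simp del: upt_Suc)
  moreover have "(\<Sum>i<k. j i) = (\<Sum>i<k. d i) + (\<Sum>i<k. j i - d i)"
    unfolding sum.distrib[symmetric] using d_le by (intro sum.cong) auto
  moreover have "2 * (\<Sum>i<k. d i div 2) < (\<Sum>i<k. d i)"
  proof -
    obtain i0 where i0: "i0 < k" "odd (d i0)"
      using odd_d by blast
    then have "2 * (d i0 div 2) < d i0"
      by presburger
    then show ?thesis
      unfolding sum_distrib_left using i0(1) by (intro sum_strict_mono_ex1) auto
  qed
  ultimately show ?thesis
    by simp
qed

lemma common_incr_subseq_beta_length_le:
  assumes "\<forall>i<k. j i < 2 * N" "common_incr_subseq k (\<lambda>i. prefix_blocks (beta k s alpha i) (j i)) W"
  shows "length W \<le> (\<Sum>i<k. j i) + 2 * N"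
proof -
  define L where "L = takeWhile (\<lambda>v. v \<le> 2 * s) W"
  define H where "H = dropWhile (\<lambda>v. v \<le> 2 * s) W"
  have W: "W = L @ H" "sorted_wrt (<) W" "\<forall>i<k. subseq W (prefix_blocks (beta k s alpha i) (j i))"
    using assms(2) unfolding L_def H_def common_incr_subseq_def by simp_all
  have L_le: "\<forall>v\<in>set L. v \<le> 2 * s"
    unfolding L_def by (auto dest: set_takeWhileD)
  show ?thesis
  proof (cases H)
    case Nil
    then show ?thesis
      using length_le_if_no_high_part[OF assms(1) _ L_le] W by simp
  next
    case (Cons h H')
    then have "2 * s < h"
      using hd_dropWhile[of "\<lambda>v. v \<le> 2 * s" W] unfolding H_def by fastforce
    then show ?thesis
      using length_le_if_high_part[OF assms(1) _ L_le] W Cons by simp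
  qed
qed

lemma exists_common_incr_subseq_beta:
  assumes "\<forall>i<k. j i < 2 * N"
  obtains W where "common_incr_subseq k (\<lambda>i. prefix_blocks (beta k s alpha i) (j i)) W"
    "length W = (\<Sum>i<k. j i) + 2 * N"
proof -
  obtain Z where Z: "common_incr_subseq k (\<lambda>i. prefix_blocks (alpha i) (j i div 2)) Z"
    "length Z = lcis k (\<lambda>i. prefix_blocks (alpha i) (j i div 2))"
    by (rule lcis_attained[OF k_pos])
  have length_Z: "length Z = (\<Sum>i<k. j i div 2) + N"
    unfolding Z(2) using assms by (intro lcis_prefix_blocks_alpha) auto
  obtain E where E: "sorted_wrt (<) E" "length E = (\<Sum>i<k. of_bool (odd (j i)))"
    "\<forall>v\<in>set E. 2 * s < v"
    "\<forall>i<k. subseq E (Tseq k s i False @ (if odd (j i) then Tseq k s i True else []))"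
    using exists_subseq_Tseq_tails[where r = "\<lambda>i. odd (j i)"] by blast
  have "\<forall>v\<in>set Z. v \<le> s"
  proof
    fix v assume "v \<in> set Z"
    then have "v \<in> set (prefix_blocks (alpha 0) (j 0 div 2))"
      using Z(1) k_pos set_subseq_subset by (fastforce simp: common_incr_subseq_def)
    then obtain q where q: "q \<le> j 0 div 2" "v \<in> set (alpha 0 q)"
      unfolding in_set_prefix_blocks_iff by blast
    have "j 0 div 2 < N"
      using assms k_pos by auto
    then show "v \<le> s"
      using alpha_le[OF k_pos _ q(2)] q(1) by simp
  qed
  then have "\<forall>v\<in>set (inflate Z). v \<le> 2 * s"
    unfolding set_inflate by auto
  then have "sorted_wrt (<) (inflate Z @ E)"
    using Z(1) E(1,3) sorted_inflate by (fastforce simp: common_incr_subseq_def sorted_wrt_append)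
  moreover have "subseq (inflate Z @ E) (prefix_blocks (beta k s alpha i) (j i))" if "i < k" for i
  proof -
    have "subseq (inflate Z) (inflate (prefix_blocks (alpha i) (j i div 2)))"
      using Z(1) that by (simp add: common_incr_subseq_def subseq_inflate)
    then have "subseq (inflate Z @ E) (inflate (prefix_blocks (alpha i) (j i div 2)) @
        Tseq k s i False @ (if odd (j i) then Tseq k s i True else []))"
      using E(4) that by (simp add: list_emb_append_mono)
    then show ?thesis
      using subseq_prefix_blocks_beta by (rule subseq_order.order_trans)
  qed
  ultimately have "common_incr_subseq k (\<lambda>i. prefix_blocks (beta k s alpha i) (j i)) (inflate Z @ E)"
    unfolding common_incr_subseq_def by blast
  moreover have "(\<Sum>i<k. j i) = 2 * (\<Sum>i<k. j i div 2) + (\<Sum>i<k. of_bool (odd (j i)))"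
    unfolding sum_distrib_left sum.distrib[symmetric] by (intro sum.cong) auto
  with length_Z E(2) have "length (inflate Z @ E) = (\<Sum>i<k. j i) + 2 * N"
    by (simp add: length_inflate)
  ultimately show ?thesis
    by (rule that)
qed

lemma lcis_prefix_blocks_beta:
  "\<forall>i<k. j i < 2 * N \<Longrightarrow>
    lcis k (\<lambda>i. prefix_blocks (beta k s alpha i) (j i)) = (\<Sum>i<k. j i) + 2 * N"
proof -
  assume j: "\<forall>i<k. j i < 2 * N"
  obtain W where "common_incr_subseq k (\<lambda>i. prefix_blocks (beta k s alpha i) (j i)) W"
    "length W = (\<Sum>i<k. j i) + 2 * N"
    using exists_common_incr_subseq_beta[OF j] .
  then show ?thesis
    using common_incr_subseq_beta_length_le[OF j] by (intro lcis_eqI[OF k_pos])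
qed

end

theorem lemma13:
  fixes k N :: nat and alpha :: "nat \<Rightarrow> nat \<Rightarrow> int list"
  assumes "k \<ge> 2"
    and "\<exists>m. N = 2 ^ m"
    and "\<forall>j :: nat \<Rightarrow> nat. (\<forall>i<k. j i < N) \<longrightarrow>
           lcis k (\<lambda>i. prefix_blocks (alpha i) (j i)) = (\<Sum>i<k. j i) + N"
    and "s = Max (\<Union>i<k. set (concat (map (alpha i) [0..<N])))"
  shows "\<forall>j :: nat \<Rightarrow> nat. (\<forall>i<k. j i < 2 * N) \<longrightarrow>
           lcis k (\<lambda>i. prefix_blocks (beta k s alpha i) (j i)) = (\<Sum>i<k. j i) + 2 * N"
proof -
  have "lcis_block_family k N alpha s"
  proof
    show "0 < k"
      using assms(1) by simp
    show "lcis k (\<lambda>i. prefix_blocks (alpha i) (j i)) = (\<Sum>i<k. j i) + N" if "\<forall>i<k. j i < N" for j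
      using assms(3) that by simp
    show "a \<le> s" if "i < k" "q < N" "a \<in> set (alpha i q)" for i q a
    proof -
      have "a \<in> set (concat (map (alpha i) [0..<N]))"
        using that(2,3) by auto
      then show ?thesis
        unfolding assms(4) using that(1) by (intro Max_ge) auto
    qed
  qed
  then interpret lcis_block_family k N alpha s .
  show ?thesis
    by (intro allI impI) (rule lcis_prefix_blocks_beta)
qed

end
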